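(* If $(e_n)_{n\in\mathbb{N}}$ is a seminormalized quasisubsymmetric basic sequence in a Banach space, then either $(e_n)$ is equivalent to the unit vector basis of $\ell_1$, or there exists a subsequence $(e_{k_n})$ of $(e_n)$ such that the sequence $(e_{k_{2n}}-e_{k_{2n-1}})_{n\in\mathbb{N}}$ is an unconditional basic sequence.
   Context: A sequence $(e_n)$ is seminormalized if $0<\inf_n\|e_n\|\le\sup_n\|e_n\|<\infty$. For basic sequences, $(x_n)$ dominates $(y_n)$ if there is $C>0$ with $\|\sum a_ny_n\|\le C\|\sum a_nx_n\|$ for all finitely supported scalar sequences $(a_n)$. A basic sequence $(e_n)$ is quasisubsymmetric if for any two increasing sequences $(k_n),(\ell_n)$ of positive integers with $k_n\le\ell_n$ for all $n$, $(e_{k_n})$ dominates $(e_{\ell_n})$. *)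

theory Defs
  imports "HOL-Analysis.Analysis"
begin

text \<open>Sequences are indexed by nat starting at 0; scalars are real.\<close>

definition seminormalized :: "(nat \<Rightarrow> 'a::real_normed_vector) \<Rightarrow> bool" where
  "seminormalized e \<longleftrightarrow> (\<exists>m M. 0 < m \<and> (\<forall>n. m \<le> norm (e n) \<and> norm (e n) \<le> M))"

definition basic_seq :: "(nat \<Rightarrow> 'a::real_normed_vector) \<Rightarrow> bool" where
  "basic_seq e \<longleftrightarrow>
     (\<forall>x \<in> closure (span (range e)). \<exists>!a::nat \<Rightarrow> real. (\<lambda>N. \<Sum>i<N. a i *\<^sub>R e i) \<longlonglongrightarrow> x)"

definition unconditional_basic_seq :: "(nat \<Rightarrow> 'a::real_normed_vector) \<Rightarrow> bool" where
  "unconditional_basic_seq e \<longleftrightarrow> basic_seq e \<and>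
     (\<forall>x \<in> closure (span (range e)). \<forall>a::nat \<Rightarrow> real.
        (\<lambda>N. \<Sum>i<N. a i *\<^sub>R e i) \<longlonglongrightarrow> x \<longrightarrow>
        (\<forall>\<sigma>::nat \<Rightarrow> nat. bij \<sigma> \<longrightarrow> (\<lambda>N. \<Sum>i<N. a (\<sigma> i) *\<^sub>R e (\<sigma> i)) \<longlonglongrightarrow> x))"

text \<open>(x n) dominates (y n): finitely supported coefficient sequences are exactly
  those supported in some initial segment {..<N}.\<close>
definition dominates :: "(nat \<Rightarrow> 'a::real_normed_vector) \<Rightarrow> (nat \<Rightarrow> 'b::real_normed_vector) \<Rightarrow> bool" where
  "dominates x y \<longleftrightarrow> (\<exists>C>0. \<forall>(a::nat \<Rightarrow> real) N.
      norm (\<Sum>n<N. a n *\<^sub>R y n) \<le> C * norm (\<Sum>n<N. a n *\<^sub>R x n))"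

definition quasisubsymmetric :: "(nat \<Rightarrow> 'a::real_normed_vector) \<Rightarrow> bool" where
  "quasisubsymmetric e \<longleftrightarrow> basic_seq e \<and>
     (\<forall>k l :: nat \<Rightarrow> nat. strict_mono k \<longrightarrow> strict_mono l \<longrightarrow> (\<forall>n. k n \<le> l n) \<longrightarrow>
        dominates (e \<circ> k) (e \<circ> l))"

text \<open>Equivalence to the unit vector basis of l1 (whose norm is the sum of absolute
  values of the coefficients): mutual domination, written out.\<close>
definition equivalent_l1_basis :: "(nat \<Rightarrow> 'a::real_normed_vector) \<Rightarrow> bool" where
  "equivalent_l1_basis e \<longleftrightarrow> (\<exists>c C. 0 < c \<and> 0 < C \<and> (\<forall>(a::nat \<Rightarrow> real) N.
      c * (\<Sum>n<N. \<bar>a n\<bar>) \<le> norm (\<Sum>n<N. a n *\<^sub>R e n) \<and>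
      norm (\<Sum>n<N. a n *\<^sub>R e n) \<le> C * (\<Sum>n<N. \<bar>a n\<bar>)))"

end

theory Submission
  imports Defs
begin

(* Quasisubsymmetry improves, by a diagonal argument, to one constant C that
   works for all pairs k <= l of increasing index maps with k 0 beyond some threshold B.
   Take a very sparse increasing sequence k and put d j = e (k (2j+1)) - e (k (2j)).
   For a finite set G of indices, moving the pair k (2j), k (2j+1) with j in G to adjacent
   positions c + i, c + i + 1, where c = k (2j+1) and i < m j stays inside the gap before
   k (2j+2), keeps l >= k; so the sum over j outside G of b j d j plus the sum over j in G
   of b j (e (c + i + 1) - e (c + i)) has norm at most C times the norm of the sum of all
   b j d j. Averaging over i telescopes the second sum into vectors of norm at most
   2 sup |e n| / m j. A basic sequence in a Banach space has a finite basis constant (by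
   the Baire category theorem), so |d j| is bounded below; with the sum of the
   1 / m j small this makes (d j) suppression unconditional, hence an unconditional basic
   sequence. Thus the second alternative always holds. *)

lemma LIMSEQ_uniform_approx:
  fixes w :: "nat \<Rightarrow> 'a::real_normed_vector"
  assumes unif: "\<And>\<epsilon>. \<epsilon> > 0 \<Longrightarrow> \<exists>J0. \<forall>J\<ge>J0. \<forall>n. norm (w n - y J n) \<le> \<epsilon>"
    and "\<And>J. (\<lambda>n. y J n) \<longlonglongrightarrow> Z J" and "Z \<longlonglongrightarrow> z"
  shows "w \<longlonglongrightarrow> z"
proof (rule LIMSEQ_I)
  fix r :: real assume "r > 0"
  obtain J0 where J0: "\<forall>J\<ge>J0. \<forall>n. norm (w n - y J n) \<le> r / 3"
    using unif[of "r / 3"] \<open>r > 0\<close> by auto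
  obtain J1 where J1: "\<forall>J\<ge>J1. norm (Z J - z) < r / 3"
    using LIMSEQ_D[OF assms(3), of "r / 3"] \<open>r > 0\<close> by auto
  define J where "J = max J0 J1"
  obtain n0 where n0: "\<forall>n\<ge>n0. norm (y J n - Z J) < r / 3"
    using LIMSEQ_D[OF assms(2), of "r / 3" J] \<open>r > 0\<close> by auto
  have "norm (w n - z) < r" if "n \<ge> n0" for n
  proof -
    have "norm (w n - z) \<le> norm (w n - y J n) + norm (y J n - Z J) + norm (Z J - z)"
      using norm_triangle_ineq[of "w n - y J n" "y J n - Z J"]
        norm_triangle_ineq[of "w n - Z J" "Z J - z"] by simp
    moreover have "norm (w n - y J n) \<le> r / 3" "norm (Z J - z) < r / 3" "norm (y J n - Z J) < r / 3"
      using J0 J1 n0 that unfolding J_def by simp_all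
    ultimately show ?thesis by linarith
  qed
  then show "\<exists>n0. \<forall>n\<ge>n0. norm (w n - z) < r" by blast
qed

lemma Cauchy_if_dist_le:
  fixes f :: "nat \<Rightarrow> 'a::metric_space" and g :: "nat \<Rightarrow> 'b::metric_space"
  assumes "Cauchy g" and "\<And>s t. dist (f s) (f t) \<le> C * dist (g s) (g t)"
  shows "Cauchy f"
proof (rule metric_CauchyI)
  fix \<epsilon> :: real assume "\<epsilon> > 0"
  then obtain T where T: "\<forall>s\<ge>T. \<forall>t\<ge>T. dist (g s) (g t) < \<epsilon> / (\<bar>C\<bar> + 1)"
    using metric_CauchyD[OF assms(1), of "\<epsilon> / (\<bar>C\<bar> + 1)"] by auto
  have "dist (f s) (f t) < \<epsilon>" if "s \<ge> T" "t \<ge> T" for s t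
  proof -
    have "dist (f s) (f t) \<le> \<bar>C\<bar> * dist (g s) (g t)"
      using assms(2)[of s t] by (meson abs_ge_self dual_order.trans mult_right_mono zero_le_dist)
    also have "\<dots> \<le> \<bar>C\<bar> * (\<epsilon> / (\<bar>C\<bar> + 1))"
      using T that by (intro mult_left_mono) (auto intro: less_imp_le)
    also have "\<dots> < \<epsilon>"
      using \<open>\<epsilon> > 0\<close> by (simp add: field_simps)
    finally show ?thesis .
  qed
  then show "\<exists>T. \<forall>s\<ge>T. \<forall>t\<ge>T. dist (f s) (f t) < \<epsilon>" by blast
qed

lemma span_range_eventual_partial_sums:
  fixes d :: "nat \<Rightarrow> 'a::real_normed_vector"
  assumes "v \<in> span (range d)"
  shows "\<exists>c N. \<forall>M\<ge>N. v = (\<Sum>i<M. c i *\<^sub>R d i)"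
  using assms
proof (induction rule: span_induct_alt)
  case base
  show ?case by (rule exI[of _ "\<lambda>_. 0"]) simp
next
  case (step a x y)
  then obtain i c N where x: "x = d i" and y: "\<forall>M\<ge>N. y = (\<Sum>i<M. c i *\<^sub>R d i)" by auto
  define c' where "c' j = c j + (if j = i then a else 0)" for j
  have "a *\<^sub>R x + y = (\<Sum>j<M. c' j *\<^sub>R d j)" if M: "M \<ge> max N (Suc i)" for M
  proof -
    have "(\<Sum>j<M. c' j *\<^sub>R d j) = (\<Sum>j<M. c j *\<^sub>R d j) + (\<Sum>j<M. if j = i then a *\<^sub>R d j else 0)"
      unfolding c'_def by (simp add: scaleR_add_left sum.distrib if_distrib[of "\<lambda>t. t *\<^sub>R _"] cong: if_cong)
    also have "\<dots> = y + a *\<^sub>R x"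
      using M x y[rule_format, of M] by (simp add: sum.delta)
    finally show ?thesis by simp
  qed
  then show ?case by blast
qed

section \<open>Suppression-unconditional sequences\<close>

locale suppression_bounded =
  fixes d :: "nat \<Rightarrow> 'a::real_normed_vector" and \<delta> K :: real
  assumes \<delta>_pos: "\<delta> > 0" and K_pos: "K > 0"
    and norm_lower: "\<And>j. \<delta> \<le> norm (d j)"
    and suppression: "\<And>b N F. F \<subseteq> {..<N} \<Longrightarrow>
        norm (\<Sum>j\<in>F. b j *\<^sub>R d j) \<le> K * norm (\<Sum>j<N. b j *\<^sub>R d j)"
begin

lemma abs_coeff_le:
  assumes "j < N"
  shows "\<bar>b j\<bar> * \<delta> \<le> K * norm (\<Sum>i<N. b i *\<^sub>R d i)"
proof -
  have "\<bar>b j\<bar> * \<delta> \<le> norm (\<Sum>i\<in>{j}. b i *\<^sub>R d i)"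
    using norm_lower by (simp add: mult_left_mono)
  also have "\<dots> \<le> K * norm (\<Sum>i<N. b i *\<^sub>R d i)"
    using suppression[of "{j}" N b] assms by simp
  finally show ?thesis .
qed

lemma norm_partial_sum_le:
  assumes "m \<le> N"
  shows "norm (\<Sum>i<m. b i *\<^sub>R d i) \<le> K * norm (\<Sum>i<N. b i *\<^sub>R d i)"
  using suppression[of "{..<m}" N b] assms by auto

lemma expansion_unique:
  assumes a: "(\<lambda>N. \<Sum>i<N. a i *\<^sub>R d i) \<longlonglongrightarrow> x" and b: "(\<lambda>N. \<Sum>i<N. b i *\<^sub>R d i) \<longlonglongrightarrow> x"
  shows "a = b"
proof
  fix j
  have "(\<lambda>N. \<Sum>i<N. (a i - b i) *\<^sub>R d i) \<longlonglongrightarrow> 0"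
    using tendsto_diff[OF a b] by (simp add: scaleR_diff_left sum_subtractf)
  then have "(\<lambda>N. K * norm (\<Sum>i<N. (a i - b i) *\<^sub>R d i)) \<longlonglongrightarrow> 0"
    using tendsto_mult_right_zero tendsto_norm_zero by blast
  moreover have "\<forall>N\<ge>Suc j. \<bar>a j - b j\<bar> * \<delta> \<le> K * norm (\<Sum>i<N. (a i - b i) *\<^sub>R d i)"
    using abs_coeff_le[of j _ "\<lambda>i. a i - b i"] by (simp add: Suc_le_eq)
  ultimately have "\<bar>a j - b j\<bar> * \<delta> \<le> 0"
    using LIMSEQ_le_const by blast
  then show "a j = b j"
    using \<delta>_pos by (simp add: mult_le_0_iff)
qed

lemma norm_partial_sum_diff_le:
  assumes "\<And>M. N \<le> M \<Longrightarrow> v = (\<Sum>i<M. a i *\<^sub>R d i)" and "\<And>M. N' \<le> M \<Longrightarrow> w = (\<Sum>i<M. b i *\<^sub>R d i)"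
  shows "norm (\<Sum>i<n. (a i - b i) *\<^sub>R d i) \<le> K * norm (v - w)"
    and "\<bar>a j - b j\<bar> * \<delta> \<le> K * norm (v - w)"
proof -
  define M where "M = max (max n (Suc j)) (max N N')"
  have "v - w = (\<Sum>i<M. (a i - b i) *\<^sub>R d i)"
    using assms[of M] unfolding M_def by (simp add: scaleR_diff_left sum_subtractf)
  then show "norm (\<Sum>i<n. (a i - b i) *\<^sub>R d i) \<le> K * norm (v - w)"
      and "\<bar>a j - b j\<bar> * \<delta> \<le> K * norm (v - w)"
    using norm_partial_sum_le[of n M] abs_coeff_le[of j M "\<lambda>i. a i - b i"] unfolding M_def by simp_all
qed

lemma expansion_exists:
  assumes "x \<in> closure (span (range d))"
  obtains a where "(\<lambda>N. \<Sum>i<N. a i *\<^sub>R d i) \<longlonglongrightarrow> x"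
proof -
  obtain v where v_span: "\<And>t. v t \<in> span (range d)" and v_lim: "v \<longlonglongrightarrow> x"
    using assms unfolding closure_sequential by blast
  have "\<forall>t. \<exists>c N. \<forall>M\<ge>N. v t = (\<Sum>i<M. c i *\<^sub>R d i)"
    using span_range_eventual_partial_sums v_span by blast
  then obtain c N where rep: "\<And>t M. N t \<le> M \<Longrightarrow> v t = (\<Sum>i<M. c t i *\<^sub>R d i)"
    by metis
  define S where "S t n = (\<Sum>i<n. c t i *\<^sub>R d i)" for t n
  have S_diff: "norm (S s n - S t n) \<le> K * norm (v s - v t)" for s t n
    using norm_partial_sum_diff_le(1)[OF rep rep] unfolding S_def by (simp add: scaleR_diff_left sum_subtractf)
  have "Cauchy (\<lambda>t. c t j)" for j
  proof (rule Cauchy_if_dist_le[OF LIMSEQ_imp_Cauchy[OF v_lim]])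
    fix s t
    have "\<bar>c s j - c t j\<bar> * \<delta> \<le> K * dist (v s) (v t)"
      using norm_partial_sum_diff_le(2)[OF rep rep] by (simp add: dist_norm)
    then show "dist (c s j) (c t j) \<le> K / \<delta> * dist (v s) (v t)"
      using \<delta>_pos by (simp add: dist_real_def field_simps)
  qed
  then have "\<forall>j. \<exists>l. (\<lambda>t. c t j) \<longlonglongrightarrow> l"
    using Cauchy_convergent_iff convergent_def by blast
  then obtain \<alpha> where \<alpha>: "\<And>j. (\<lambda>t. c t j) \<longlonglongrightarrow> \<alpha> j"
    by metis
  have S_lim: "(\<lambda>t. S t n) \<longlonglongrightarrow> (\<Sum>i<n. \<alpha> i *\<^sub>R d i)" for n
    unfolding S_def by (intro tendsto_intros \<alpha>)
  have "(\<lambda>n. \<Sum>i<n. \<alpha> i *\<^sub>R d i) \<longlonglongrightarrow> x"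
  proof (rule LIMSEQ_uniform_approx[OF _ _ v_lim])
    show "(\<lambda>n. S T n) \<longlonglongrightarrow> v T" for T
    proof (rule tendsto_eventually, rule eventually_sequentiallyI)
      show "S T n = v T" if "N T \<le> n" for n
        using rep[OF that] unfolding S_def by simp
    qed
    fix \<epsilon> :: real assume "\<epsilon> > 0"
    then obtain T0 where T0: "\<forall>s\<ge>T0. \<forall>t\<ge>T0. dist (v s) (v t) < \<epsilon> / K"
      using metric_CauchyD[OF LIMSEQ_imp_Cauchy[OF v_lim], of "\<epsilon> / K"] K_pos by auto
    have "norm ((\<Sum>i<n. \<alpha> i *\<^sub>R d i) - S T n) \<le> \<epsilon>" if "T \<ge> T0" for T n
    proof (rule LIMSEQ_le_const2)
      show "(\<lambda>s. norm (S s n - S T n)) \<longlonglongrightarrow> norm ((\<Sum>i<n. \<alpha> i *\<^sub>R d i) - S T n)"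
        by (intro tendsto_intros S_lim)
      have "norm (S s n - S T n) \<le> \<epsilon>" if "s \<ge> T" for s
      proof -
        have "norm (v s - v T) < \<epsilon> / K"
          using T0 that \<open>T \<ge> T0\<close> by (simp add: dist_norm)
        then have "K * norm (v s - v T) < \<epsilon>"
          using K_pos by (simp add: pos_less_divide_eq mult.commute)
        then show ?thesis using S_diff[of s n T] by linarith
      qed
      then show "\<exists>N. \<forall>s\<ge>N. norm (S s n - S T n) \<le> \<epsilon>" by blast
    qed
    then show "\<exists>T0. \<forall>T\<ge>T0. \<forall>n. norm ((\<Sum>i<n. \<alpha> i *\<^sub>R d i) - S T n) \<le> \<epsilon>" by blast
  qed
  then show thesis by (rule that)
qed

lemma is_basic_seq: "basic_seq d"
  unfolding basic_seq_def using expansion_exists expansion_unique by metis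

lemma norm_sum_between_le:
  assumes "{..<M} \<subseteq> F" "F \<subseteq> {..<Q}"
  shows "norm ((\<Sum>i\<in>F. a i *\<^sub>R d i) - (\<Sum>i<M. a i *\<^sub>R d i))
         \<le> K * norm ((\<Sum>i<Q. a i *\<^sub>R d i) - (\<Sum>i<M. a i *\<^sub>R d i))"
proof -
  define c where "c i = (if M \<le> i then a i else 0)" for i
  have "finite F" using assms(2) finite_subset by blast
  have "M \<le> Q" using assms by (meson lessThan_subset_iff order_trans)
  have "(\<Sum>i\<in>F. a i *\<^sub>R d i) - (\<Sum>i<M. a i *\<^sub>R d i) = (\<Sum>i\<in>F - {..<M}. c i *\<^sub>R d i)"
    using sum_diff[OF \<open>finite F\<close> assms(1), of "\<lambda>i. a i *\<^sub>R d i"] by (simp add: c_def)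
  moreover have "(\<Sum>i<Q. a i *\<^sub>R d i) - (\<Sum>i<M. a i *\<^sub>R d i) = (\<Sum>i<Q. c i *\<^sub>R d i)"
  proof -
    have "(\<Sum>i<Q. a i *\<^sub>R d i) - (\<Sum>i<M. a i *\<^sub>R d i) = (\<Sum>i\<in>{..<Q} - {..<M}. c i *\<^sub>R d i)"
      using sum_diff[of "{..<Q}" "{..<M}" "\<lambda>i. a i *\<^sub>R d i"] \<open>M \<le> Q\<close> by (simp add: c_def)
    also have "\<dots> = (\<Sum>i<Q. c i *\<^sub>R d i)"
      by (intro sum.mono_neutral_left) (auto simp: c_def)
    finally show ?thesis .
  qed
  moreover have "norm (\<Sum>i\<in>F - {..<M}. c i *\<^sub>R d i) \<le> K * norm (\<Sum>i<Q. c i *\<^sub>R d i)"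
    using suppression assms(2) by blast
  ultimately show ?thesis by simp
qed

lemma rearranged_expansion:
  assumes a: "(\<lambda>N. \<Sum>i<N. a i *\<^sub>R d i) \<longlonglongrightarrow> x" and "bij \<sigma>"
  shows "(\<lambda>N. \<Sum>i<N. a (\<sigma> i) *\<^sub>R d (\<sigma> i)) \<longlonglongrightarrow> x"
proof (rule LIMSEQ_I)
  fix r :: real assume "r > 0"
  define S where "S N = (\<Sum>i<N. a i *\<^sub>R d i)" for N
  define \<eta> where "\<eta> = r / (K + 2)"
  have "\<eta> > 0" using \<open>r > 0\<close> K_pos by (simp add: \<eta>_def)
  obtain M1 where M1: "\<forall>p\<ge>M1. \<forall>q\<ge>M1. dist (S p) (S q) < \<eta>"
    using metric_CauchyD[OF LIMSEQ_imp_Cauchy[OF a] \<open>\<eta> > 0\<close>] unfolding S_def by auto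
  obtain M2 where M2: "\<forall>n\<ge>M2. norm (S n - x) < \<eta>"
    using LIMSEQ_D[OF a \<open>\<eta> > 0\<close>] unfolding S_def by auto
  define M where "M = max M1 M2"
  obtain N0 where N0: "inv \<sigma> ` {..<M} \<subseteq> {..<N0}"
    using finite_nat_bounded by blast
  have "norm ((\<Sum>i<N. a (\<sigma> i) *\<^sub>R d (\<sigma> i)) - x) < r" if "N \<ge> N0" for N
  proof -
    define F where "F = \<sigma> ` {..<N}"
    have "(\<Sum>i<N. a (\<sigma> i) *\<^sub>R d (\<sigma> i)) = (\<Sum>i\<in>F. a i *\<^sub>R d i)"
      unfolding F_def by (simp add: sum.reindex[OF inj_on_subset[OF bij_is_inj[OF \<open>bij \<sigma>\<close>] subset_UNIV]])
    moreover have "{..<M} \<subseteq> F"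
    proof
      fix i assume "i \<in> {..<M}"
      then have "inv \<sigma> i < N" using N0 that by auto
      moreover have "\<sigma> (inv \<sigma> i) = i" using \<open>bij \<sigma>\<close> by (simp add: bij_is_surj surj_f_inv_f)
      ultimately show "i \<in> F" unfolding F_def by (metis imageI lessThan_iff)
    qed
    moreover obtain Q where "F \<subseteq> {..<Q}"
      using finite_nat_bounded[of F] unfolding F_def by blast
    ultimately have "norm ((\<Sum>i<N. a (\<sigma> i) *\<^sub>R d (\<sigma> i)) - S M) \<le> K * norm (S Q - S M)"
      using norm_sum_between_le unfolding S_def by presburger
    moreover have "M \<le> Q"
      using \<open>{..<M} \<subseteq> F\<close> \<open>F \<subseteq> {..<Q}\<close> by (meson lessThan_subset_iff order_trans)
    then have "K * norm (S Q - S M) \<le> K * \<eta>"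
      using M1 K_pos unfolding M_def dist_norm by (auto intro!: mult_left_mono less_imp_le)
    moreover have "norm (S M - x) < \<eta>" using M2 M_def by simp
    ultimately have "norm ((\<Sum>i<N. a (\<sigma> i) *\<^sub>R d (\<sigma> i)) - x) < K * \<eta> + \<eta>"
      using norm_triangle_ineq[of "(\<Sum>i<N. a (\<sigma> i) *\<^sub>R d (\<sigma> i)) - S M" "S M - x"] by simp
    also have "\<dots> < (K + 2) * \<eta>"
      using \<open>\<eta> > 0\<close> by (simp add: algebra_simps)
    also have "\<dots> = r"
      using K_pos unfolding \<eta>_def by simp
    finally show ?thesis .
  qed
  then show "\<exists>N0. \<forall>N\<ge>N0. norm ((\<Sum>i<N. a (\<sigma> i) *\<^sub>R d (\<sigma> i)) - x) < r" by blast
qed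

theorem unconditional_basic: "unconditional_basic_seq d"
  unfolding unconditional_basic_seq_def using is_basic_seq rearranged_expansion by blast

end

section \<open>The basis constant of a basic sequence\<close>

lemma halving_iteration:
  fixes f :: "'a::real_normed_vector \<Rightarrow> 'a"
  assumes step: "\<And>y. y \<in> S \<Longrightarrow> y - f y \<in> S \<and> norm (y - f y) \<le> norm y / 2" and "z \<in> S"
  shows "((\<lambda>y. y - f y) ^^ j) z \<in> S"
    and "norm (((\<lambda>y. y - f y) ^^ j) z) \<le> (1/2) ^ j * norm z"
    and "(\<lambda>j. f (((\<lambda>y. y - f y) ^^ j) z)) sums z"
proof -
  define r where "r j = ((\<lambda>y. y - f y) ^^ j) z" for j
  have r_Suc: "r (Suc j) = r j - f (r j)" for j
    by (simp add: r_def)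
  have r_mem: "r j \<in> S" for j
    by (induction j) (simp_all add: r_def[of 0] r_Suc \<open>z \<in> S\<close> step)
  then show "((\<lambda>y. y - f y) ^^ j) z \<in> S"
    by (simp add: r_def)
  have r_norm: "norm (r j) \<le> (1/2) ^ j * norm z" for j
  proof (induction j)
    case (Suc j)
    then show ?case using step[OF r_mem[of j]] by (simp add: r_Suc)
  qed (simp add: r_def)
  then show "norm (((\<lambda>y. y - f y) ^^ j) z) \<le> (1/2) ^ j * norm z"
    by (simp add: r_def)
  have "(\<Sum>j<J. f (r j)) = z - r J" for J
    by (induction J) (simp_all add: r_def[of 0] r_Suc)
  moreover have "r \<longlonglongrightarrow> 0"
  proof (rule Lim_null_comparison)
    show "\<forall>\<^sub>F j in sequentially. norm (r j) \<le> (1/2) ^ j * norm z"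
      using r_norm by simp
    show "(\<lambda>j. (1/2) ^ j * norm z) \<longlonglongrightarrow> 0"
      by (intro tendsto_mult_left_zero LIMSEQ_power_zero) simp
  qed
  ultimately show "(\<lambda>j. f (((\<lambda>y. y - f y) ^^ j) z)) sums z"
    unfolding sums_def r_def[symmetric] using tendsto_diff[OF tendsto_const[of z]] by fastforce
qed

lemma subspace_closure_span:
  fixes S :: "'a::real_normed_vector set"
  shows "subspace (closure (span S))"
  unfolding subspace_def
proof (intro conjI ballI allI)
  show "0 \<in> closure (span S)"
    using closure_subset span_zero by blast
next
  fix x y assume "x \<in> closure (span S)" "y \<in> closure (span S)"
  then obtain u v where "\<And>t. u t \<in> span S" "u \<longlonglongrightarrow> x" "\<And>t. v t \<in> span S" "v \<longlonglongrightarrow> y"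
    unfolding closure_sequential by metis
  then show "x + y \<in> closure (span S)"
    unfolding closure_sequential by (intro exI[of _ "\<lambda>t. u t + v t"]) (auto intro: span_add tendsto_add)
next
  fix c x assume "x \<in> closure (span S)"
  then obtain u where "\<And>t. u t \<in> span S" "u \<longlonglongrightarrow> x"
    unfolding closure_sequential by metis
  then show "c *\<^sub>R x \<in> closure (span S)"
    unfolding closure_sequential by (intro exI[of _ "\<lambda>t. c *\<^sub>R u t"]) (auto intro: span_scale tendsto_scaleR)
qed

locale basic_sequence =
  fixes e :: "nat \<Rightarrow> 'a::banach"
  assumes basic: "basic_seq e"
begin

abbreviation closed_span :: "'a set" where
  "closed_span \<equiv> closure (span (range e))"

definition coeff :: "'a \<Rightarrow> nat \<Rightarrow> real" where
  "coeff x = (THE a. (\<lambda>N. \<Sum>i<N. a i *\<^sub>R e i) \<longlonglongrightarrow> x)"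

definition proj :: "nat \<Rightarrow> 'a \<Rightarrow> 'a" where
  "proj n x = (\<Sum>i<n. coeff x i *\<^sub>R e i)"

lemma subspace_closed_span: "subspace closed_span"
  by (rule subspace_closure_span)

lemma expansion_ex1: "x \<in> closed_span \<Longrightarrow> \<exists>!a. (\<lambda>N. \<Sum>i<N. a i *\<^sub>R e i) \<longlonglongrightarrow> x"
  using basic unfolding basic_seq_def by blast

lemma proj_tendsto: "x \<in> closed_span \<Longrightarrow> (\<lambda>n. proj n x) \<longlonglongrightarrow> x"
  unfolding proj_def coeff_def by (rule theI'[OF expansion_ex1])

lemma coeff_eqI: "x \<in> closed_span \<Longrightarrow> (\<lambda>N. \<Sum>i<N. a i *\<^sub>R e i) \<longlonglongrightarrow> x \<Longrightarrow> coeff x = a"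
  unfolding coeff_def by (rule the1_equality[OF expansion_ex1])

lemma coeff_add:
  assumes "x \<in> closed_span" "y \<in> closed_span"
  shows "coeff (x + y) = (\<lambda>i. coeff x i + coeff y i)"
proof (rule coeff_eqI)
  show "x + y \<in> closed_span"
    using assms subspace_add[OF subspace_closed_span] by blast
  show "(\<lambda>N. \<Sum>i<N. (coeff x i + coeff y i) *\<^sub>R e i) \<longlonglongrightarrow> x + y"
    using tendsto_add[OF proj_tendsto proj_tendsto, OF assms]
    unfolding proj_def by (simp add: scaleR_add_left sum.distrib)
qed

lemma coeff_scaleR:
  assumes "x \<in> closed_span"
  shows "coeff (c *\<^sub>R x) = (\<lambda>i. c * coeff x i)"
proof (rule coeff_eqI)
  show "c *\<^sub>R x \<in> closed_span"
    using assms subspace_scale[OF subspace_closed_span] by blast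
  show "(\<lambda>N. \<Sum>i<N. (c * coeff x i) *\<^sub>R e i) \<longlonglongrightarrow> c *\<^sub>R x"
    using tendsto_scaleR[OF tendsto_const proj_tendsto, OF assms, of c]
    unfolding proj_def by (simp add: scaleR_sum_right)
qed

lemma proj_add: "x \<in> closed_span \<Longrightarrow> y \<in> closed_span \<Longrightarrow> proj n (x + y) = proj n x + proj n y"
  unfolding proj_def by (simp add: coeff_add scaleR_add_left sum.distrib)

lemma proj_scaleR: "x \<in> closed_span \<Longrightarrow> proj n (c *\<^sub>R x) = c *\<^sub>R proj n x"
  unfolding proj_def by (simp add: coeff_scaleR scaleR_sum_right)

lemma proj_diff: "x \<in> closed_span \<Longrightarrow> y \<in> closed_span \<Longrightarrow> proj n (x - y) = proj n x - proj n y"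
  using proj_add[of x "(-1) *\<^sub>R y" n] proj_scaleR[of y n "-1"] subspace_scale[OF subspace_closed_span, of y "-1"]
  by simp

lemma proj_zero: "proj n 0 = 0"
  using proj_scaleR[OF subspace_0[OF subspace_closed_span], of n 0] by simp

lemma proj_sum:
  assumes "finite A" "\<And>j. j \<in> A \<Longrightarrow> s j \<in> closed_span"
  shows "proj n (\<Sum>j\<in>A. s j) = (\<Sum>j\<in>A. proj n (s j))"
  using assms
proof (induction A rule: finite_induct)
  case empty
  then show ?case by (simp add: proj_zero)
next
  case (insert j A)
  then have "(\<Sum>j\<in>A. s j) \<in> closed_span"
    using subspace_sum[OF subspace_closed_span] by blast
  then show ?case
    using insert by (simp add: proj_add)
qed

lemma e_nonzero: "e i \<noteq> 0"
proof
  assume "e i = 0"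
  have "0 \<in> closed_span"
    by (rule subspace_0[OF subspace_closed_span])
  then have "coeff 0 = (\<lambda>j. if j = i then 1 else 0)"
    using \<open>e i = 0\<close> by (intro coeff_eqI) (simp_all add: if_distrib[of "\<lambda>c. c *\<^sub>R _"] cong: if_cong)
  moreover have "coeff 0 = (\<lambda>_. 0)"
    using \<open>0 \<in> closed_span\<close> by (intro coeff_eqI) simp_all
  ultimately show False
    by (metis one_neq_zero)
qed

lemma proj_Suc_diff: "proj (Suc i) x - proj i x = coeff x i *\<^sub>R e i"
  unfolding proj_def by simp

lemma summable_coeff:
  assumes "\<And>j n. norm (proj n (s j)) \<le> c j" and "summable c"
  shows "summable (\<lambda>j. coeff (s j) i)"
proof (rule summable_comparison_test)
  have "norm (e i) > 0" using e_nonzero by simp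
  have "\<bar>coeff (s j) i\<bar> * norm (e i) \<le> 2 * c j" for j
    using proj_Suc_diff[of i "s j"] norm_triangle_ineq4[of "proj (Suc i) (s j)" "proj i (s j)"]
      assms(1)[of "Suc i" j] assms(1)[of i j] by simp
  then show "\<exists>N. \<forall>j\<ge>N. norm (coeff (s j) i) \<le> 2 * c j / norm (e i)"
    using \<open>norm (e i) > 0\<close> by (simp add: pos_le_divide_eq)
  show "summable (\<lambda>j. 2 * c j / norm (e i))"
    using \<open>summable c\<close> by (intro summable_divide summable_mult)
qed

lemma norm_proj_le_suminf:
  assumes s_mem: "\<And>j. s j \<in> closed_span" and "s sums z" and "summable c"
    and bound: "\<And>j n. norm (proj n (s j)) \<le> c j"
  shows "norm (proj n z) \<le> suminf c"
proof -
  define Z where "Z J = (\<Sum>j<J. s j)" for J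
  have Z_mem: "Z J \<in> closed_span" for J
    unfolding Z_def by (rule subspace_sum[OF subspace_closed_span s_mem])
  have "Z \<longlonglongrightarrow> z"
    using \<open>s sums z\<close> unfolding sums_def Z_def .
  then have "z \<in> closed_span"
    using closed_sequentially[OF closed_closure] Z_mem by blast
  have coeff_summable: "summable (\<lambda>j. coeff (s j) i)" for i
    using bound \<open>summable c\<close> by (rule summable_coeff)
  define \<alpha> where "\<alpha> i = (\<Sum>j. coeff (s j) i)" for i
  define w where "w n = (\<Sum>i<n. \<alpha> i *\<^sub>R e i)" for n
  have proj_sums: "(\<lambda>j. proj n (s j)) sums w n" for n
    unfolding proj_def w_def \<alpha>_def
    by (intro sums_sum sums_scaleR_left summable_sums coeff_summable)
  have tail: "norm (w n - proj n (Z J)) \<le> (\<Sum>j. c (j + J))" for n J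
  proof -
    have "(\<lambda>j. proj n (s (j + J))) sums (w n - proj n (Z J))"
      using sums_split_initial_segment[OF proj_sums, of n J] s_mem
      unfolding Z_def by (simp add: proj_sum)
    then have "w n - proj n (Z J) = (\<Sum>j. proj n (s (j + J)))"
      by (rule sums_unique)
    also have "norm \<dots> \<le> (\<Sum>j. c (j + J))"
      using bound summable_ignore_initial_segment[OF \<open>summable c\<close>] by (rule norm_suminf_le)
    finally show ?thesis .
  qed
  have tail_lim: "(\<lambda>J. \<Sum>j. c (j + J)) \<longlonglongrightarrow> 0"
  proof -
    have "(\<lambda>J. suminf c - (\<Sum>j<J. c j)) \<longlonglongrightarrow> suminf c - suminf c"
      using summable_LIMSEQ[OF \<open>summable c\<close>] by (intro tendsto_diff tendsto_const)
    then show ?thesis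
      by (simp add: suminf_minus_initial_segment[OF \<open>summable c\<close>])
  qed
  have "w \<longlonglongrightarrow> z"
  proof (rule LIMSEQ_uniform_approx[OF _ proj_tendsto[OF Z_mem] \<open>Z \<longlonglongrightarrow> z\<close>])
    fix \<epsilon> :: real assume "\<epsilon> > 0"
    then obtain J0 where J0: "\<forall>J\<ge>J0. norm ((\<Sum>j. c (j + J)) - 0) < \<epsilon>"
      using LIMSEQ_D[OF tail_lim] by blast
    have "norm (w n - proj n (Z J)) \<le> \<epsilon>" if "J \<ge> J0" for J n
    proof -
      have "(\<Sum>j. c (j + J)) < \<epsilon>"
        using J0 that by (simp add: abs_less_iff)
      then show ?thesis using tail[of n J] by linarith
    qed
    then show "\<exists>J0. \<forall>J\<ge>J0. \<forall>n. norm (w n - proj n (Z J)) \<le> \<epsilon>" by blast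
  qed
  then have "proj n z = w n"
    using coeff_eqI[OF \<open>z \<in> closed_span\<close>] unfolding proj_def w_def by simp
  also have "norm (w n) \<le> suminf c"
    using norm_suminf_le[of "\<lambda>j. proj n (s j)" c] bound \<open>summable c\<close> sums_unique[OF proj_sums] by simp
  finally show ?thesis .
qed

definition proj_bounded :: "nat \<Rightarrow> 'a set" where
  "proj_bounded m = {x \<in> closed_span. \<forall>n. norm (proj n x) \<le> real m}"

lemma closure_proj_bounded_subset: "closure (proj_bounded m) \<subseteq> closed_span"
  using closure_mono[of "proj_bounded m" closed_span] unfolding proj_bounded_def by auto

lemma closed_span_eq_Union: "closed_span = (\<Union>m. closure (proj_bounded m))"
proof
  show "closed_span \<subseteq> (\<Union>m. closure (proj_bounded m))"
  proof
    fix x assume "x \<in> closed_span"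
    then have "Bseq (\<lambda>n. proj n x)"
      using proj_tendsto convergent_def convergent_imp_Bseq by blast
    then obtain B where "\<forall>n. norm (proj n x) \<le> B"
      unfolding Bseq_def by auto
    moreover obtain m where "B \<le> real m"
      using real_arch_simple by blast
    ultimately have "x \<in> proj_bounded m"
      unfolding proj_bounded_def using \<open>x \<in> closed_span\<close> by (auto intro: order_trans)
    then show "x \<in> (\<Union>m. closure (proj_bounded m))"
      using closure_subset by blast
  qed
  show "(\<Union>m. closure (proj_bounded m)) \<subseteq> closed_span"
    using closure_proj_bounded_subset by blast
qed

lemma closure_proj_bounded_contains_ball:
  obtains m x0 r where "r > 0" "x0 \<in> closed_span" "ball x0 r \<inter> closed_span \<subseteq> closure (proj_bounded m)"
proof -
  let ?X = "top_of_set closed_span"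
  let ?G = "range (\<lambda>m. closure (proj_bounded m))"
  have "completely_metrizable_space ?X"
    by (rule completely_metrizable_space_closedin[OF completely_metrizable_space_euclidean]) simp
  moreover have "countable ?G"
    by simp
  ultimately have "?X interior_of \<Union>?G = {}" if "\<And>T. T \<in> ?G \<Longrightarrow> ?X interior_of T = {}"
    using Baire_category_alt[of ?X ?G] that closure_proj_bounded_subset by (blast intro: closed_subset)
  moreover have "?X interior_of \<Union>?G = closed_span"
    using closed_span_eq_Union interior_of_topspace[of ?X] by simp
  ultimately obtain T where "T \<in> ?G" "?X interior_of T \<noteq> {}"
    using subspace_0[OF subspace_closed_span] by blast
  then obtain m U where "openin ?X U" "U \<subseteq> closure (proj_bounded m)" "U \<noteq> {}"
    unfolding interior_of_eq_empty by blast
  then obtain x0 r where "x0 \<in> U" "r > 0" "ball x0 r \<inter> closed_span \<subseteq> U"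
    unfolding openin_contains_ball by blast
  moreover have "x0 \<in> closed_span"
    using \<open>openin ?X U\<close> \<open>x0 \<in> U\<close> openin_subset by fastforce
  ultimately show thesis
    using that \<open>U \<subseteq> closure (proj_bounded m)\<close> by blast
qed

lemma closure_proj_bounded_contains_centred_ball:
  obtains m r where "r > 0" "\<And>z. z \<in> closed_span \<Longrightarrow> norm z < r \<Longrightarrow> z \<in> closure (proj_bounded m)"
proof -
  obtain m x0 r where "r > 0" "x0 \<in> closed_span" and ball: "ball x0 r \<inter> closed_span \<subseteq> closure (proj_bounded m)"
    by (rule closure_proj_bounded_contains_ball)
  have "z \<in> closure (proj_bounded m)" if "z \<in> closed_span" "norm z < r" for z
    unfolding closure_approachable
  proof (intro allI impI)
    fix \<epsilon> :: real assume "\<epsilon> > 0"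
    have "x0 + z \<in> closure (proj_bounded m)" "x0 - z \<in> closure (proj_bounded m)"
      using ball that \<open>x0 \<in> closed_span\<close> subspace_add[OF subspace_closed_span] subspace_diff[OF subspace_closed_span]
      by (auto simp: dist_norm)
    then obtain s1 s2 where s: "s1 \<in> proj_bounded m" "dist s1 (x0 + z) < \<epsilon>" "s2 \<in> proj_bounded m" "dist s2 (x0 - z) < \<epsilon>"
      using \<open>\<epsilon> > 0\<close> unfolding closure_approachable by meson
    then have mem: "s1 \<in> closed_span" "s2 \<in> closed_span"
      unfolding proj_bounded_def by auto
    define s where "s = (1/2) *\<^sub>R (s1 - s2)"
    have "s \<in> closed_span"
      unfolding s_def using mem subspace_scale[OF subspace_closed_span] subspace_diff[OF subspace_closed_span] by blast
    moreover have "norm (proj n s) \<le> real m" for n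
    proof -
      have "proj n s = (1/2) *\<^sub>R (proj n s1 - proj n s2)"
        unfolding s_def using mem by (simp add: proj_scaleR proj_diff subspace_diff[OF subspace_closed_span])
      moreover have "norm (proj n s1) \<le> real m" "norm (proj n s2) \<le> real m"
        using s(1,3) unfolding proj_bounded_def by auto
      then have "norm (proj n s1 - proj n s2) \<le> real m + real m"
        using norm_triangle_ineq4[of "proj n s1" "proj n s2"] by linarith
      ultimately show ?thesis by simp
    qed
    moreover have "dist s z < \<epsilon>"
    proof -
      have "s - z = (1/2) *\<^sub>R ((s1 - (x0 + z)) - (s2 - (x0 - z)))"
        unfolding s_def by (simp add: algebra_simps) (simp flip: scaleR_add_left)
      moreover have "norm ((s1 - (x0 + z)) - (s2 - (x0 - z))) < \<epsilon> + \<epsilon>"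
        using norm_triangle_ineq4[of "s1 - (x0 + z)" "s2 - (x0 - z)"] s(2,4) by (simp add: dist_norm)
      ultimately show ?thesis by (simp add: dist_norm)
    qed
    ultimately show "\<exists>s\<in>proj_bounded m. dist s z < \<epsilon>"
      unfolding proj_bounded_def by blast
  qed
  then show thesis using that \<open>r > 0\<close> by blast
qed

lemma halving_approximation:
  obtains L where "L > 0"
    and "\<And>z. z \<in> closed_span \<Longrightarrow>
           \<exists>s\<in>closed_span. (\<forall>n. norm (proj n s) \<le> L * norm z) \<and> norm (z - s) \<le> norm z / 2"
proof -
  obtain m r where "r > 0" and ball: "\<And>z. z \<in> closed_span \<Longrightarrow> norm z < r \<Longrightarrow> z \<in> closure (proj_bounded m)"
    using closure_proj_bounded_contains_centred_ball by blast
  define L where "L = 2 * (real m + 1) / r"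
  have "\<exists>s\<in>closed_span. (\<forall>n. norm (proj n s) \<le> L * norm z) \<and> norm (z - s) \<le> norm z / 2"
    if "z \<in> closed_span" for z
  proof (cases "z = 0")
    case True
    then show ?thesis
      using subspace_0[OF subspace_closed_span] by (auto simp: proj_zero)
  next
    case False
    define t where "t = r / (2 * norm z)"
    have "t > 0" using False \<open>r > 0\<close> by (simp add: t_def)
    have "t *\<^sub>R z \<in> closed_span" "norm (t *\<^sub>R z) < r"
      using that subspace_scale[OF subspace_closed_span] False \<open>r > 0\<close> by (auto simp: t_def)
    then obtain s' where s': "s' \<in> proj_bounded m" "dist s' (t *\<^sub>R z) < r / 4"
      using ball \<open>r > 0\<close> unfolding closure_approachable by (metis divide_pos_pos zero_less_numeral)
    then have "s' \<in> closed_span" unfolding proj_bounded_def by simp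
    define s where "s = (1 / t) *\<^sub>R s'"
    have "s \<in> closed_span"
      unfolding s_def using \<open>s' \<in> closed_span\<close> subspace_scale[OF subspace_closed_span] by blast
    moreover have "norm (proj n s) \<le> L * norm z" for n
    proof -
      have "norm (proj n s) = norm (proj n s') / t"
        unfolding s_def using \<open>s' \<in> closed_span\<close> \<open>t > 0\<close> by (simp add: proj_scaleR)
      also have "\<dots> \<le> real m / t"
        using s'(1) \<open>t > 0\<close> unfolding proj_bounded_def by (simp add: divide_right_mono)
      also have "\<dots> \<le> L * norm z"
        using False \<open>r > 0\<close> unfolding t_def L_def by (simp add: field_simps)
      finally show ?thesis .
    qed
    moreover have "norm (z - s) \<le> norm z / 2"
    proof -
      have "z - s = (1 / t) *\<^sub>R (t *\<^sub>R z - s')"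
        unfolding s_def using \<open>t > 0\<close> by (simp add: scaleR_diff_right)
      then have "norm (z - s) = norm (t *\<^sub>R z - s') / t"
        using \<open>t > 0\<close> by simp
      also have "\<dots> \<le> (r / 4) / t"
        using s'(2) \<open>t > 0\<close> by (intro divide_right_mono) (auto simp: dist_norm norm_minus_commute)
      also have "\<dots> = norm z / 2"
        using False \<open>r > 0\<close> unfolding t_def by simp
      finally show ?thesis .
    qed
    ultimately show ?thesis by blast
  qed
  moreover have "L > 0" using \<open>r > 0\<close> by (simp add: L_def)
  ultimately show thesis using that by blast
qed

theorem proj_bound:
  obtains C where "C > 0" "\<And>z n. z \<in> closed_span \<Longrightarrow> norm (proj n z) \<le> C * norm z"
proof -
  obtain L where "L > 0" and
    "\<And>z. z \<in> closed_span \<Longrightarrow>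
       \<exists>s\<in>closed_span. (\<forall>n. norm (proj n s) \<le> L * norm z) \<and> norm (z - s) \<le> norm z / 2"
    using halving_approximation by blast
  then obtain f where f_mem: "\<And>z. z \<in> closed_span \<Longrightarrow> f z \<in> closed_span"
    and f_proj: "\<And>z n. z \<in> closed_span \<Longrightarrow> norm (proj n (f z)) \<le> L * norm z"
    and f_close: "\<And>z. z \<in> closed_span \<Longrightarrow> norm (z - f z) \<le> norm z / 2"
    by metis
  have step: "y - f y \<in> closed_span \<and> norm (y - f y) \<le> norm y / 2" if "y \<in> closed_span" for y
    using that f_mem f_close subspace_diff[OF subspace_closed_span] by blast
  have "norm (proj n z) \<le> (2 * L) * norm z" if "z \<in> closed_span" for z n
  proof -
    define r where "r j = ((\<lambda>y. y - f y) ^^ j) z" for j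
    have r_mem: "r j \<in> closed_span" and r_norm: "norm (r j) \<le> (1/2) ^ j * norm z" for j
      unfolding r_def using halving_iteration(1,2)[OF step that] by blast+
    have "(\<lambda>j. f (r j)) sums z"
      unfolding r_def using halving_iteration(3)[OF step that] .
    moreover have "norm (proj n (f (r j))) \<le> L * ((1/2) ^ j * norm z)" for n j
    proof -
      have "norm (proj n (f (r j))) \<le> L * norm (r j)"
        by (rule f_proj[OF r_mem])
      also have "\<dots> \<le> L * ((1/2) ^ j * norm z)"
        using r_norm \<open>L > 0\<close> by (intro mult_left_mono) auto
      finally show ?thesis .
    qed
    moreover have geometric: "(\<lambda>j. L * ((1/2) ^ j * norm z)) sums (L * (2 * norm z))"
      using geometric_sums[of "1/2 :: real"] by (intro sums_mult sums_mult2) simp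
    ultimately have "norm (proj n z) \<le> (\<Sum>j. L * ((1/2) ^ j * norm z))"
      using f_mem[OF r_mem] sums_summable[OF geometric] by (intro norm_proj_le_suminf)
    also have "\<dots> = 2 * L * norm z"
      using sums_unique[OF geometric] by simp
    finally show ?thesis by simp
  qed
  then show thesis using that \<open>L > 0\<close> by (metis mult_pos_pos zero_less_numeral)
qed

end

lemma basic_seq_partial_sum_bound:
  fixes e :: "nat \<Rightarrow> 'a::banach"
  assumes "basic_seq e"
  obtains C where "C > 0" "\<And>a m N. m \<le> N \<Longrightarrow> norm (\<Sum>i<m. a i *\<^sub>R e i) \<le> C * norm (\<Sum>i<N. a i *\<^sub>R e i)"
proof -
  interpret basic_sequence e by unfold_locales (rule assms)
  obtain C where "C > 0" and bound: "\<And>z n. z \<in> closed_span \<Longrightarrow> norm (proj n z) \<le> C * norm z"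
    using proj_bound by blast
  have "norm (\<Sum>i<m. a i *\<^sub>R e i) \<le> C * norm (\<Sum>i<N. a i *\<^sub>R e i)" if "m \<le> N" for a m N
  proof -
    define a' where "a' i = (if i < N then a i else 0)" for i
    define v where "v = (\<Sum>i<N. a' i *\<^sub>R e i)"
    have "v \<in> span (range e)"
      unfolding v_def by (intro span_sum span_scale span_base) auto
    then have "v \<in> closed_span"
      by (rule closure_subset[THEN subsetD])
    moreover have "(\<lambda>M. \<Sum>i<M. a' i *\<^sub>R e i) \<longlonglongrightarrow> v"
    proof (rule tendsto_eventually)
      have "(\<Sum>i<M. a' i *\<^sub>R e i) = v" if "M \<ge> N" for M
        unfolding v_def using that by (intro sum.mono_neutral_right) (auto simp: a'_def)
      then show "\<forall>\<^sub>F M in sequentially. (\<Sum>i<M. a' i *\<^sub>R e i) = v"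
        unfolding eventually_sequentially by blast
    qed
    ultimately have "proj m v = (\<Sum>i<m. a' i *\<^sub>R e i)"
      unfolding proj_def using coeff_eqI by simp
    moreover have "(\<Sum>i<m. a' i *\<^sub>R e i) = (\<Sum>i<m. a i *\<^sub>R e i)" "v = (\<Sum>i<N. a i *\<^sub>R e i)"
      using that unfolding v_def a'_def by (auto intro: sum.cong)
    ultimately show ?thesis
      using bound[OF \<open>v \<in> closed_span\<close>, of m] by simp
  qed
  then show thesis using that \<open>C > 0\<close> by blast
qed

lemma basic_seq_diff_lower_bound:
  fixes e :: "nat \<Rightarrow> 'a::banach"
  assumes "basic_seq e" and "\<mu> > 0" and "\<And>n. \<mu> \<le> norm (e n)"
  obtains \<delta> where "\<delta> > 0" "\<And>p q. p < q \<Longrightarrow> \<delta> \<le> norm (e q - e p)"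
proof -
  obtain C where "C > 0" and bound: "\<And>a m N. m \<le> N \<Longrightarrow>
      norm (\<Sum>i<m. a i *\<^sub>R e i) \<le> C * norm (\<Sum>i<N. a i *\<^sub>R e i)"
    using basic_seq_partial_sum_bound[OF assms(1)] by blast
  have "\<mu> / C \<le> norm (e q - e p)" if "p < q" for p q
  proof -
    define a where "a i = (if i = q then 1 else 0) - (if i = p then 1 else (0::real))" for i
    have partial: "(\<Sum>i<n. a i *\<^sub>R e i) = (if q < n then e q else 0) - (if p < n then e p else 0)" for n
      unfolding a_def by (simp add: scaleR_diff_left sum_subtractf if_distrib[of "\<lambda>c. c *\<^sub>R _"] sum.delta cong: if_cong)
    have "\<mu> \<le> norm (\<Sum>i<Suc p. a i *\<^sub>R e i)"
      using assms(3)[of p] that by (simp add: partial)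
    also have "\<dots> \<le> C * norm (\<Sum>i<Suc q. a i *\<^sub>R e i)"
      using bound[of "Suc p" "Suc q" a] that by simp
    also have "\<dots> = C * norm (e q - e p)"
      using that by (simp add: partial)
    finally show ?thesis
      using \<open>C > 0\<close> by (simp add: divide_le_eq mult.commute)
  qed
  then show thesis using that \<open>C > 0\<close> \<open>\<mu> > 0\<close> by (metis divide_pos_pos)
qed

section \<open>Uniform domination\<close>

definition subseq_le :: "(nat \<Rightarrow> nat) \<Rightarrow> (nat \<Rightarrow> nat) \<Rightarrow> bool" where
  "subseq_le k l \<longleftrightarrow> strict_mono k \<and> strict_mono l \<and> (\<forall>n. k n \<le> l n)"

lemma diagonal_prefix_limit:
  fixes f :: "nat \<Rightarrow> nat \<Rightarrow> 'b"
  assumes "strict_mono p" and agree: "\<And>j n. n < p j \<Longrightarrow> f (Suc j) n = f j n"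
  shows "n < p j \<Longrightarrow> f (Suc n) n = f j n"
proof -
  have stable: "f j n = f i n" if "i \<le> j" "n < p i" for i j n
    using that(1)
  proof (induction j)
    case (Suc j)
    show ?case
    proof (cases "i = Suc j")
      case False
      then have "i \<le> j" using Suc.prems by simp
      moreover have "p i \<le> p j" using \<open>i \<le> j\<close> \<open>strict_mono p\<close> by (simp add: strict_mono_less_eq)
      ultimately show ?thesis using Suc.IH agree \<open>n < p i\<close> by simp
    qed simp
  qed simp
  assume "n < p j"
  show "f (Suc n) n = f j n"
  proof (cases "Suc n \<le> j")
    case True
    have "n < p (Suc n)"
      using strict_mono_imp_increasing[OF \<open>strict_mono p\<close>, of "Suc n"] by simp
    then show ?thesis using stable[OF True] by simp
  next
    case False
    then show ?thesis using stable[of j "Suc n" n] \<open>n < p j\<close> by simp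
  qed
qed

lemma subseq_le_diagonal:
  assumes "strict_mono P" and "\<And>j. subseq_le (K j) (L j)"
    and agree: "\<And>j n. n < P j \<Longrightarrow> K (Suc j) n = K j n \<and> L (Suc j) n = L j n"
  shows "subseq_le (\<lambda>n. K (Suc n) n) (\<lambda>n. L (Suc n) n)"
    and "n < P j \<Longrightarrow> K (Suc n) n = K j n \<and> L (Suc n) n = L j n"
proof -
  have K_diag: "K (Suc n) n = K j n" and L_diag: "L (Suc n) n = L j n" if "n < P j" for n j
    using diagonal_prefix_limit[OF \<open>strict_mono P\<close>, of K] diagonal_prefix_limit[OF \<open>strict_mono P\<close>, of L]
      agree that by auto
  then show "n < P j \<Longrightarrow> K (Suc n) n = K j n \<and> L (Suc n) n = L j n" by blast
  have P_large: "n < P (Suc (Suc n))" "Suc n < P (Suc (Suc n))" for n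
    using strict_mono_imp_increasing[OF \<open>strict_mono P\<close>, of "Suc (Suc n)"] by auto
  show "subseq_le (\<lambda>n. K (Suc n) n) (\<lambda>n. L (Suc n) n)"
    unfolding subseq_le_def
  proof (intro conjI allI)
    show "strict_mono (\<lambda>n. K (Suc n) n)"
      unfolding strict_mono_Suc_iff
      using assms(2) P_large K_diag unfolding subseq_le_def strict_mono_def by (metis lessI)
    show "strict_mono (\<lambda>n. L (Suc n) n)"
      unfolding strict_mono_Suc_iff
      using assms(2) P_large L_diag unfolding subseq_le_def strict_mono_def by (metis lessI)
    show "K (Suc n) n \<le> L (Suc n) n" for n
      using assms(2) unfolding subseq_le_def by blast
  qed
qed

lemma prefix_chain:
  fixes V :: "nat \<Rightarrow> nat \<Rightarrow> (nat \<Rightarrow> nat) \<Rightarrow> (nat \<Rightarrow> nat) \<Rightarrow> bool"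
  assumes extend: "\<And>j p k0 l0. subseq_le k0 l0 \<Longrightarrow>
      \<exists>k l q. subseq_le k l \<and> (\<forall>n<p. k n = k0 n \<and> l n = l0 n) \<and> p < q \<and> V j q k l"
  obtains P K L where "strict_mono P" and "\<And>j. subseq_le (K j) (L j)"
    and "\<And>j n. n < P j \<Longrightarrow> K (Suc j) n = K j n \<and> L (Suc j) n = L j n"
    and "\<And>j. V j (P (Suc j)) (K (Suc j)) (L (Suc j))"
proof -
  have "\<exists>F. \<forall>j. subseq_le (fst (F j)) (fst (snd (F j))) \<and>
      (subseq_le (fst (F (Suc j))) (fst (snd (F (Suc j)))) \<and> snd (snd (F j)) < snd (snd (F (Suc j))) \<and>
       (\<forall>n<snd (snd (F j)). fst (F (Suc j)) n = fst (F j) n \<and> fst (snd (F (Suc j))) n = fst (snd (F j)) n) \<and>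
       V j (snd (snd (F (Suc j)))) (fst (F (Suc j))) (fst (snd (F (Suc j)))))"
  proof (rule dependent_nat_choice)
    show "\<exists>s::(nat \<Rightarrow> nat) \<times> (nat \<Rightarrow> nat) \<times> nat. subseq_le (fst s) (fst (snd s))"
      by (rule exI[of _ "(id, id, 0)"]) (simp add: subseq_le_def strict_mono_def)
  next
    fix s :: "(nat \<Rightarrow> nat) \<times> (nat \<Rightarrow> nat) \<times> nat" and j :: nat
    assume "subseq_le (fst s) (fst (snd s))"
    then obtain k l q where "subseq_le k l" "\<forall>n<snd (snd s). k n = fst s n \<and> l n = fst (snd s) n"
        "snd (snd s) < q" "V j q k l"
      using extend by blast
    then show "\<exists>t. subseq_le (fst t) (fst (snd t)) \<and>
        subseq_le (fst t) (fst (snd t)) \<and> snd (snd s) < snd (snd t) \<and>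
        (\<forall>n<snd (snd s). fst t n = fst s n \<and> fst (snd t) n = fst (snd s) n) \<and>
        V j (snd (snd t)) (fst t) (fst (snd t))"
      by (intro exI[of _ "(k, l, q)"]) auto
  qed
  then obtain F where F: "\<And>j. subseq_le (fst (F j)) (fst (snd (F j)))"
    "\<And>j. snd (snd (F j)) < snd (snd (F (Suc j)))"
    "\<And>j n. n < snd (snd (F j)) \<Longrightarrow> fst (F (Suc j)) n = fst (F j) n \<and> fst (snd (F (Suc j))) n = fst (snd (F j)) n"
    "\<And>j. V j (snd (snd (F (Suc j)))) (fst (F (Suc j))) (fst (snd (F (Suc j))))"
    by blast
  show thesis
  proof (rule that[where P = "\<lambda>j. snd (snd (F j))" and K = "\<lambda>j. fst (F j)" and L = "\<lambda>j. fst (snd (F j))"])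
    show "strict_mono (\<lambda>j. snd (snd (F j)))"
      using F(2) by (simp add: strict_mono_Suc_iff)
  qed (use F in auto)
qed

(* If no prefix-cylinder of pairs admits a uniform constant, pairs violating the constants
   1, 2, 3, ... can be chosen one after another, each agreeing with its predecessor on a longer
   prefix; domination then fails for their diagonal limit. *)
lemma dominates_on_cylinder:
  fixes e :: "nat \<Rightarrow> 'a::real_normed_vector"
  assumes dom: "\<And>k l. subseq_le k l \<Longrightarrow> dominates (e \<circ> k) (e \<circ> l)"
  shows "\<exists>C k0 l0 p. C > 0 \<and> subseq_le k0 l0 \<and> (\<forall>k l a N. subseq_le k l \<longrightarrow>
           (\<forall>n<p. k n = k0 n \<and> l n = l0 n) \<longrightarrow>
           norm (\<Sum>n<N. a n *\<^sub>R e (l n)) \<le> C * norm (\<Sum>n<N. a n *\<^sub>R e (k n)))"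
proof (rule ccontr)
  define violated where "violated j q k l \<longleftrightarrow> (\<exists>a N. N \<le> q \<and>
      norm (\<Sum>n<N. a n *\<^sub>R e (l n)) > real (Suc j) * norm (\<Sum>n<N. a n *\<^sub>R e (k n)))"
    for j q :: nat and k l :: "nat \<Rightarrow> nat"
  assume no_cylinder: "\<not> ?thesis"
  have extend: "\<exists>k l q. subseq_le k l \<and> (\<forall>n<p. k n = k0 n \<and> l n = l0 n) \<and> p < q \<and> violated j q k l"
    if "subseq_le k0 l0" for j p k0 l0
  proof -
    have "\<not> (\<forall>k l a N. subseq_le k l \<longrightarrow> (\<forall>n<p. k n = k0 n \<and> l n = l0 n) \<longrightarrow>
        norm (\<Sum>n<N. a n *\<^sub>R e (l n)) \<le> real (Suc j) * norm (\<Sum>n<N. a n *\<^sub>R e (k n)))"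
      using no_cylinder that of_nat_0_less_iff zero_less_Suc by blast
    then obtain k l a N where "subseq_le k l" "\<forall>n<p. k n = k0 n \<and> l n = l0 n"
        "norm (\<Sum>n<N. a n *\<^sub>R e (l n)) > real (Suc j) * norm (\<Sum>n<N. a n *\<^sub>R e (k n))"
      by (auto simp: not_le)
    then have "subseq_le k l \<and> (\<forall>n<p. k n = k0 n \<and> l n = l0 n) \<and> p < max N (Suc p)
        \<and> violated j (max N (Suc p)) k l"
      unfolding violated_def by (auto intro!: exI[of _ a] exI[of _ N])
    then show ?thesis by blast
  qed
  obtain P K L where "strict_mono P" and KL: "\<And>j. subseq_le (K j) (L j)"
    and agree: "\<And>j n. n < P j \<Longrightarrow> K (Suc j) n = K j n \<and> L (Suc j) n = L j n"
    and viol: "\<And>j. violated j (P (Suc j)) (K (Suc j)) (L (Suc j))"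
    by (rule prefix_chain[where V = violated]) (erule extend, rule that)
  define k where "k n = K (Suc n) n" for n
  define l where "l n = L (Suc n) n" for n
  have "subseq_le k l"
    unfolding k_def l_def using subseq_le_diagonal(1)[where K = K and L = L, OF \<open>strict_mono P\<close> KL agree] .
  then have "dominates (e \<circ> k) (e \<circ> l)" by (rule dom)
  then obtain C where C: "\<And>a N. norm (\<Sum>n<N. a n *\<^sub>R e (l n)) \<le> C * norm (\<Sum>n<N. a n *\<^sub>R e (k n))"
    unfolding dominates_def by auto
  obtain j where "C \<le> real (Suc j)"
    by (meson le_SucI of_nat_le_iff order.trans real_arch_simple)
  obtain a N where "N \<le> P (Suc j)"
    and viol_j: "norm (\<Sum>n<N. a n *\<^sub>R e (L (Suc j) n)) > real (Suc j) * norm (\<Sum>n<N. a n *\<^sub>R e (K (Suc j) n))"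
    using viol[of j] unfolding violated_def by blast
  have "k n = K (Suc j) n" "l n = L (Suc j) n" if "n < N" for n
    using subseq_le_diagonal(2)[where K = K and L = L, OF \<open>strict_mono P\<close> KL agree] that \<open>N \<le> P (Suc j)\<close>
    unfolding k_def l_def by auto
  then have "(\<Sum>n<N. a n *\<^sub>R e (k n)) = (\<Sum>n<N. a n *\<^sub>R e (K (Suc j) n))"
      "(\<Sum>n<N. a n *\<^sub>R e (l n)) = (\<Sum>n<N. a n *\<^sub>R e (L (Suc j) n))"
    by (auto intro!: sum.cong)
  with viol_j have "norm (\<Sum>n<N. a n *\<^sub>R e (l n)) > real (Suc j) * norm (\<Sum>n<N. a n *\<^sub>R e (k n))"
    by simp
  moreover have "C * norm (\<Sum>n<N. a n *\<^sub>R e (k n)) \<le> real (Suc j) * norm (\<Sum>n<N. a n *\<^sub>R e (k n))"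
    using \<open>C \<le> real (Suc j)\<close> by (intro mult_right_mono) auto
  ultimately show False using C[of a N] by linarith
qed

lemma sum_shift_zero_prefix:
  fixes f :: "nat \<Rightarrow> 'a::comm_monoid_add"
  shows "(\<Sum>n<N + p. if n < p then 0 else f (n - p)) = (\<Sum>n<N. f n)"
  by (induction N) simp_all

lemma strict_mono_splice:
  fixes k0 k :: "nat \<Rightarrow> nat"
  assumes "strict_mono k0" and "strict_mono k" and "k0 p < k 0"
  shows "strict_mono (\<lambda>n. if n < p then k0 n else k (n - p))"
proof (rule strict_mono_Suc_iff[THEN iffD2], intro allI)
  fix n
  consider "Suc n < p" | "Suc n = p" | "p \<le> n" by linarith
  then show "(if n < p then k0 n else k (n - p)) < (if Suc n < p then k0 (Suc n) else k (Suc n - p))"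
  proof cases
    case 1
    then show ?thesis using assms(1) by (simp add: strict_mono_def)
  next
    case 2
    then have "k0 n < k0 p" using assms(1) by (simp add: strict_mono_def)
    then show ?thesis using 2 assms(3) by simp
  next
    case 3
    then have "Suc n - p = Suc (n - p)" by simp
    then show ?thesis using 3 assms(2) by (simp add: strict_mono_def)
  qed
qed

(* Prepending the prefix of (k0, l0) below p moves any pair starting beyond l0 p into the
   cylinder, with the coefficients shifted by p. *)
lemma dominates_uniformly_eventually:
  fixes e :: "nat \<Rightarrow> 'a::real_normed_vector"
  assumes "\<And>k l. subseq_le k l \<Longrightarrow> dominates (e \<circ> k) (e \<circ> l)"
  shows "\<exists>B C. C > 0 \<and> (\<forall>k l a N. subseq_le k l \<longrightarrow> B \<le> k 0 \<longrightarrow>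
           norm (\<Sum>n<N. a n *\<^sub>R e (l n)) \<le> C * norm (\<Sum>n<N. a n *\<^sub>R e (k n)))"
proof -
  obtain C k0 l0 p where "C > 0" and "subseq_le k0 l0" and cylinder:
    "\<forall>k l a N. subseq_le k l \<longrightarrow> (\<forall>n<p. k n = k0 n \<and> l n = l0 n) \<longrightarrow>
       norm (\<Sum>n<N. a n *\<^sub>R e (l n)) \<le> C * norm (\<Sum>n<N. a n *\<^sub>R e (k n))"
    using dominates_on_cylinder[OF assms] by blast
  have "norm (\<Sum>n<N. a n *\<^sub>R e (l n)) \<le> C * norm (\<Sum>n<N. a n *\<^sub>R e (k n))"
    if "subseq_le k l" and "Suc (l0 p) \<le> k 0" for k l a N
  proof -
    define k' where "k' n = (if n < p then k0 n else k (n - p))" for n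
    define l' where "l' n = (if n < p then l0 n else l (n - p))" for n
    define a' where "a' n = (if n < p then 0 else a (n - p))" for n
    have shift: "(\<Sum>n<N + p. a' n *\<^sub>R e (f' n)) = (\<Sum>n<N. a n *\<^sub>R e (f n))"
      if "\<And>n. p \<le> n \<Longrightarrow> f' n = f (n - p)" for f f'
    proof -
      have "(\<Sum>n<N + p. a' n *\<^sub>R e (f' n)) = (\<Sum>n<N + p. if n < p then 0 else a (n - p) *\<^sub>R e (f (n - p)))"
        using that by (intro sum.cong) (auto simp: a'_def)
      then show ?thesis
        using sum_shift_zero_prefix[where f="\<lambda>n. a n *\<^sub>R e (f n)"] by simp
    qed
    have mono: "strict_mono k0" "strict_mono l0" "strict_mono k" "strict_mono l"
      and le: "k0 p \<le> l0 p" "k 0 \<le> l 0"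
      using \<open>subseq_le k0 l0\<close> \<open>subseq_le k l\<close> unfolding subseq_le_def by blast+
    have "strict_mono k'"
      using strict_mono_splice[OF mono(1,3), of p] le \<open>Suc (l0 p) \<le> k 0\<close> unfolding k'_def by simp
    moreover have "strict_mono l'"
      using strict_mono_splice[OF mono(2,4), of p] le \<open>Suc (l0 p) \<le> k 0\<close> unfolding l'_def by simp
    moreover have "k' n \<le> l' n" for n
      using \<open>subseq_le k0 l0\<close> \<open>subseq_le k l\<close> unfolding k'_def l'_def subseq_le_def by simp
    ultimately have "subseq_le k' l'"
      unfolding subseq_le_def by blast
    moreover have "\<forall>n<p. k' n = k0 n \<and> l' n = l0 n"
      unfolding k'_def l'_def by simp
    moreover have "(\<Sum>n<N + p. a' n *\<^sub>R e (k' n)) = (\<Sum>n<N. a n *\<^sub>R e (k n))"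
      by (rule shift) (simp add: k'_def)
    moreover have "(\<Sum>n<N + p. a' n *\<^sub>R e (l' n)) = (\<Sum>n<N. a n *\<^sub>R e (l n))"
      by (rule shift) (simp add: l'_def)
    ultimately show ?thesis
      using cylinder[rule_format, of k' l' a' "N + p"] by simp
  qed
  then show ?thesis using \<open>C > 0\<close> by blast
qed

section \<open>Telescoping averages of differences\<close>

lemma norm_average_le:
  fixes f :: "nat \<Rightarrow> 'a::real_normed_vector"
  assumes "m > 0" and "\<And>i. i < m \<Longrightarrow> norm (f i) \<le> R"
  shows "norm ((1 / real m) *\<^sub>R (\<Sum>i<m. f i)) \<le> R"
proof -
  have "norm (\<Sum>i<m. f i) \<le> real m * R"
    using sum_norm_le[of "{..<m}" f "\<lambda>_. R"] assms(2) by simp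
  then show ?thesis using assms(1) by (simp add: field_simps)
qed

lemma norm_add_sum_averages_le:
  fixes u :: "nat \<Rightarrow> nat \<Rightarrow> 'a::real_normed_vector"
  assumes "finite G" and "\<And>j. j \<in> G \<Longrightarrow> m j > 0"
    and "\<And>\<sigma>. (\<And>j. j \<in> G \<Longrightarrow> \<sigma> j < m j) \<Longrightarrow> norm (x + (\<Sum>j\<in>G. b j *\<^sub>R u j (\<sigma> j))) \<le> R"
  shows "norm (x + (\<Sum>j\<in>G. b j *\<^sub>R ((1 / real (m j)) *\<^sub>R (\<Sum>i<m j. u j i)))) \<le> R"
  using assms
proof (induction G arbitrary: x rule: finite_induct)
  case empty
  then show ?case by auto
next
  case (insert j G)
  define avg where "avg j' = (1 / real (m j')) *\<^sub>R (\<Sum>i<m j'. u j' i)" for j'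
  define rest where "rest = (\<Sum>j'\<in>G. b j' *\<^sub>R avg j')"
  have "norm ((x + rest) + b j *\<^sub>R u j i) \<le> R" if "i < m j" for i
  proof -
    have "norm ((x + b j *\<^sub>R u j i) + rest) \<le> R"
      unfolding rest_def avg_def
    proof (rule insert.IH)
      fix \<sigma> assume \<sigma>: "\<And>j'. j' \<in> G \<Longrightarrow> \<sigma> j' < m j'"
      have "norm (x + (\<Sum>j'\<in>insert j G. b j' *\<^sub>R u j' ((\<sigma>(j := i)) j'))) \<le> R"
        using insert.prems(1) \<sigma> that by (intro insert.prems(2)) auto
      moreover have "(\<Sum>j'\<in>G. b j' *\<^sub>R u j' ((\<sigma>(j := i)) j')) = (\<Sum>j'\<in>G. b j' *\<^sub>R u j' (\<sigma> j'))"
        using insert.hyps by (intro sum.cong) auto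
      ultimately show "norm (x + b j *\<^sub>R u j i + (\<Sum>j'\<in>G. b j' *\<^sub>R u j' (\<sigma> j'))) \<le> R"
        using insert.hyps by (simp add: add.assoc)
    qed (use insert.prems in auto)
    then show ?thesis by (simp add: algebra_simps)
  qed
  then have "norm ((1 / real (m j)) *\<^sub>R (\<Sum>i<m j. (x + rest) + b j *\<^sub>R u j i)) \<le> R"
    using insert.prems(1) by (intro norm_average_le) auto
  moreover have "(1 / real (m j)) *\<^sub>R (\<Sum>i<m j. (x + rest) + b j *\<^sub>R u j i) = x + rest + b j *\<^sub>R avg j"
    using insert.prems(1)[of j]
    by (simp add: avg_def sum.distrib scaleR_sum_right[symmetric] scaleR_add_right sum_constant_scaleR)
  ultimately have "norm (x + rest + b j *\<^sub>R avg j) \<le> R"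
    by metis
  moreover have "(\<Sum>j'\<in>insert j G. b j' *\<^sub>R avg j') = b j *\<^sub>R avg j + rest"
    using insert.hyps unfolding rest_def by simp
  ultimately show ?case
    unfolding avg_def[symmetric] by (simp add: algebra_simps)
qed

lemma sum_alternating_pairs:
  fixes f :: "nat \<Rightarrow> nat" and e :: "nat \<Rightarrow> 'a::real_vector"
  shows "(\<Sum>n<2*N. (if even n then - b (n div 2) else b (n div 2)) *\<^sub>R e (f n))
       = (\<Sum>j<N. b j *\<^sub>R (e (f (2*j+1)) - e (f (2*j))))"
  by (induction N) (simp_all add: scaleR_diff_right)

locale difference_subsequence =
  fixes e :: "nat \<Rightarrow> 'a::real_normed_vector" and B L :: nat and C M \<delta> :: real
  assumes C_pos: "C > 0" and \<delta>_pos: "\<delta> > 0" and L_pos: "L > 0"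
    and norm_le: "\<And>n. norm (e n) \<le> M"
    and L_large: "4 * M \<le> real L * \<delta>" \<comment> \<open>makes the averaging error at most \<open>\<delta> / 2\<close> per unit of coefficient\<close>
    and uniform: "\<And>k l a N. subseq_le k l \<Longrightarrow> B \<le> k 0 \<Longrightarrow>
        norm (\<Sum>n<N. a n *\<^sub>R e (l n)) \<le> C * norm (\<Sum>n<N. a n *\<^sub>R e (k n))"
    and separated: "\<And>p q. p < q \<Longrightarrow> \<delta> \<le> norm (e q - e p)"
begin

definition sparse :: "nat \<Rightarrow> nat" where
  "sparse n = B + L * 4 ^ n"

definition gap_len :: "nat \<Rightarrow> nat" where
  "gap_len j = L * 2 ^ Suc j"

definition d :: "nat \<Rightarrow> 'a" where
  "d j = e (sparse (2*j+1)) - e (sparse (2*j))"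

definition step_diff :: "nat \<Rightarrow> nat \<Rightarrow> 'a" where
  "step_diff j i = e (sparse (2*j+1) + Suc i) - e (sparse (2*j+1) + i)"

(* For j in G the positions 2j and 2j+1 are moved to the adjacent indices
   sparse (2j+1) + sigma j and its successor. *)
definition shifted :: "nat set \<Rightarrow> (nat \<Rightarrow> nat) \<Rightarrow> nat \<Rightarrow> nat" where
  "shifted G \<sigma> n =
     (if n div 2 \<in> G then sparse (2 * (n div 2) + 1) + \<sigma> (n div 2) + n mod 2 else sparse n)"

lemma strict_mono_sparse: "strict_mono sparse"
  unfolding strict_mono_def sparse_def using L_pos by (auto intro: power_strict_increasing)

lemma gap_len_pos: "gap_len j > 0"
  unfolding gap_len_def using L_pos by simp

lemma sparse_gap: "sparse (2*j+1) + gap_len j < sparse (2*j+2)"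
proof -
  have "(2::nat) ^ Suc j \<le> 4 ^ Suc j"
    by (rule power_mono) simp_all
  also have "\<dots> \<le> 4 ^ (2*j+1)"
    by (rule power_increasing) simp_all
  finally have "L * 2 ^ Suc j \<le> L * 4 ^ (2*j+1)"
    by simp
  moreover have "0 < L * 4 ^ (2*j+1)" "L * 4 ^ (2*j+2) = 4 * (L * 4 ^ (2*j+1))"
    using L_pos by simp_all
  ultimately show ?thesis
    unfolding sparse_def gap_len_def by linarith
qed

lemma shifted_even: "shifted G \<sigma> (2*j) = (if j \<in> G then sparse (2*j+1) + \<sigma> j else sparse (2*j))"
  unfolding shifted_def by simp

lemma shifted_odd: "shifted G \<sigma> (Suc (2*j)) = (if j \<in> G then Suc (sparse (Suc (2*j)) + \<sigma> j) else sparse (Suc (2*j)))"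
  unfolding shifted_def by simp

lemma subseq_le_shifted:
  assumes \<sigma>: "\<And>j. j \<in> G \<Longrightarrow> \<sigma> j < gap_len j"
  shows "subseq_le sparse (shifted G \<sigma>)"
  unfolding subseq_le_def
proof (intro conjI allI strict_mono_sparse)
  have sparse_less: "sparse a < sparse b" if "a < b" for a b
    using strict_mono_sparse that by (simp add: strict_mono_def)
  show "strict_mono (shifted G \<sigma>)"
  proof (rule strict_mono_Suc_iff[THEN iffD2], intro allI)
    fix n :: nat
    obtain j where "n = 2*j \<or> n = Suc (2*j)"
      by (metis oddE evenE Suc_eq_plus1)
    then show "shifted G \<sigma> n < shifted G \<sigma> (Suc n)"
    proof
      assume "n = 2*j"
      then show ?thesis
        using sparse_less[of "2*j" "Suc (2*j)"] by (simp add: shifted_even shifted_odd)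
    next
      assume n: "n = Suc (2*j)"
      have "shifted G \<sigma> n \<le> sparse (2*j+1) + gap_len j"
        using \<sigma> n by (auto simp: shifted_odd Suc_le_eq)
      also have "\<dots> < sparse (2*j+2)"
        by (rule sparse_gap)
      also have "\<dots> \<le> shifted G \<sigma> (Suc n)"
        using n sparse_less[of "2*j+2" "2*Suc j + 1"] shifted_even[of G \<sigma> "Suc j"] by auto
      finally show ?thesis .
    qed
  qed
  fix n :: nat
  obtain j where "n = 2*j \<or> n = Suc (2*j)"
    by (metis oddE evenE Suc_eq_plus1)
  then show "sparse n \<le> shifted G \<sigma> n"
    using sparse_less[of "2*j" "Suc (2*j)"] by (auto simp: shifted_even shifted_odd)
qed

lemma norm_d_ge: "\<delta> \<le> norm (d j)"
  unfolding d_def using separated strict_mono_sparse by (simp add: strict_mono_def)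

lemma norm_sum_shifted_le:
  assumes "G \<subseteq> {..<N}" and "\<And>j. j \<in> G \<Longrightarrow> \<sigma> j < gap_len j"
  shows "norm ((\<Sum>j\<in>{..<N} - G. b j *\<^sub>R d j) + (\<Sum>j\<in>G. b j *\<^sub>R step_diff j (\<sigma> j)))
         \<le> C * norm (\<Sum>j<N. b j *\<^sub>R d j)"
proof -
  define a where "a n = (if even n then - b (n div 2) else b (n div 2))" for n
  let ?l = "shifted G \<sigma>"
  have split: "(\<Sum>j<N. h j) = (\<Sum>j\<in>{..<N} - G. h j) + (\<Sum>j\<in>G. h j)" for h :: "nat \<Rightarrow> 'a"
    using sum.subset_diff[OF assms(1)] by simp
  have "(\<Sum>n<2*N. a n *\<^sub>R e (?l n)) = (\<Sum>j<N. b j *\<^sub>R (e (?l (2*j+1)) - e (?l (2*j))))"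
    unfolding a_def by (rule sum_alternating_pairs)
  also have "\<dots> = (\<Sum>j\<in>{..<N} - G. b j *\<^sub>R d j) + (\<Sum>j\<in>G. b j *\<^sub>R step_diff j (\<sigma> j))"
    unfolding split using assms(1)
    by (intro arg_cong2[where f="(+)"] sum.cong) (auto simp: shifted_even shifted_odd step_diff_def d_def)
  finally have "(\<Sum>n<2*N. a n *\<^sub>R e (?l n))
      = (\<Sum>j\<in>{..<N} - G. b j *\<^sub>R d j) + (\<Sum>j\<in>G. b j *\<^sub>R step_diff j (\<sigma> j))" .
  moreover have "(\<Sum>n<2*N. a n *\<^sub>R e (sparse n)) = (\<Sum>j<N. b j *\<^sub>R d j)"
    unfolding a_def d_def by (rule sum_alternating_pairs)
  moreover have "subseq_le sparse ?l"
    using assms(2) by (rule subseq_le_shifted)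
  then have "norm (\<Sum>n<2*N. a n *\<^sub>R e (?l n)) \<le> C * norm (\<Sum>n<2*N. a n *\<^sub>R e (sparse n))"
    by (rule uniform) (simp add: sparse_def)
  ultimately show ?thesis by simp
qed

lemma norm_average_step_diff_le:
  "norm ((1 / real (gap_len j)) *\<^sub>R (\<Sum>i<gap_len j. step_diff j i)) \<le> 2 * M / real (gap_len j)"
proof -
  have "(\<Sum>i<gap_len j. step_diff j i) = e (sparse (2*j+1) + gap_len j) - e (sparse (2*j+1) + 0)"
    unfolding step_diff_def by (rule sum_lessThan_telescope)
  then have "norm (\<Sum>i<gap_len j. step_diff j i)
      \<le> norm (e (sparse (2*j+1) + gap_len j)) + norm (e (sparse (2*j+1) + 0))"
    by (simp only: norm_triangle_ineq4)
  also have "\<dots> \<le> 2 * M"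
    using norm_le[of "sparse (2*j+1) + gap_len j"] norm_le[of "sparse (2*j+1) + 0"] by linarith
  finally show ?thesis
    using gap_len_pos[of j] by (simp add: divide_right_mono)
qed

lemma norm_sum_outside_le:
  assumes "G \<subseteq> {..<N}"
  shows "norm (\<Sum>j\<in>{..<N} - G. b j *\<^sub>R d j)
         \<le> C * norm (\<Sum>j<N. b j *\<^sub>R d j) + (\<Sum>j\<in>G. \<bar>b j\<bar> * (2 * M / real (gap_len j)))"
proof -
  define x where "x = (\<Sum>j\<in>{..<N} - G. b j *\<^sub>R d j)"
  define avg where "avg j = (1 / real (gap_len j)) *\<^sub>R (\<Sum>i<gap_len j. step_diff j i)" for j
  have "finite G" using assms finite_subset by blast
  have "norm (x + (\<Sum>j\<in>G. b j *\<^sub>R avg j)) \<le> C * norm (\<Sum>j<N. b j *\<^sub>R d j)"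
    unfolding avg_def x_def
    by (rule norm_add_sum_averages_le[OF \<open>finite G\<close>]) (auto intro: gap_len_pos norm_sum_shifted_le[OF assms])
  moreover have "norm (\<Sum>j\<in>G. b j *\<^sub>R avg j) \<le> (\<Sum>j\<in>G. \<bar>b j\<bar> * (2 * M / real (gap_len j)))"
  proof (rule order_trans[OF norm_sum sum_mono])
    fix j
    have "\<bar>b j\<bar> * norm (avg j) \<le> \<bar>b j\<bar> * (2 * M / real (gap_len j))"
      using norm_average_step_diff_le unfolding avg_def by (rule mult_left_mono) simp
    then show "norm (b j *\<^sub>R avg j) \<le> \<bar>b j\<bar> * (2 * M / real (gap_len j))"
      by simp
  qed
  moreover have "norm x \<le> norm (x + (\<Sum>j\<in>G. b j *\<^sub>R avg j)) + norm (\<Sum>j\<in>G. b j *\<^sub>R avg j)"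
    using norm_triangle_ineq4[of "x + (\<Sum>j\<in>G. b j *\<^sub>R avg j)" "\<Sum>j\<in>G. b j *\<^sub>R avg j"] by simp
  ultimately show ?thesis
    unfolding x_def by linarith
qed

lemma sum_inverse_gap_len_le: "(\<Sum>j<N. 1 / real (gap_len j)) \<le> 1 / real L"
proof -
  have "(\<Sum>j<N. 1 / real (gap_len j)) = (1 / real L) * (\<Sum>j<N. (1/2) ^ Suc j)"
    unfolding gap_len_def by (simp add: sum_distrib_left power_one_over)
  also have "(\<Sum>j<N. (1/2::real) ^ Suc j) = 1 - (1/2) ^ N"
    by (induction N) simp_all
  also have "(1 / real L) * (1 - (1/2) ^ N) \<le> 1 / real L"
    using L_pos by (intro mult_left_le) simp_all
  finally show ?thesis .
qed

lemma averaging_error_le: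
  assumes "G \<subseteq> {..<N}" and "0 \<le> \<beta>" and "\<And>j. j < N \<Longrightarrow> \<bar>b j\<bar> \<le> \<beta>"
  shows "(\<Sum>j\<in>G. \<bar>b j\<bar> * (2 * M / real (gap_len j))) \<le> \<beta> * \<delta> / 2"
proof -
  have "M \<ge> 0" using norm_le[of 0] norm_ge_zero order_trans by blast
  have "(\<Sum>j\<in>G. \<bar>b j\<bar> * (2 * M / real (gap_len j))) \<le> (\<Sum>j\<in>G. \<beta> * (2 * M / real (gap_len j)))"
    using assms(1,3) \<open>M \<ge> 0\<close> by (intro sum_mono mult_right_mono) auto
  also have "\<dots> \<le> (\<Sum>j<N. \<beta> * (2 * M / real (gap_len j)))"
    using assms(1,2) \<open>M \<ge> 0\<close> by (intro sum_mono2) auto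
  also have "\<dots> = 2 * M * \<beta> * (\<Sum>j<N. 1 / real (gap_len j))"
    by (simp add: sum_distrib_left mult_ac)
  also have "\<dots> \<le> 2 * M * \<beta> * (1 / real L)"
    using sum_inverse_gap_len_le \<open>M \<ge> 0\<close> assms(2) by (intro mult_left_mono) auto
  also have "\<dots> \<le> \<beta> * \<delta> / 2"
    using mult_left_mono[OF L_large assms(2)] L_pos by (simp add: field_simps mult_ac)
  finally show ?thesis .
qed

lemma abs_coeff_le_norm:
  assumes "j < N"
  shows "\<bar>b j\<bar> * \<delta> / 2 \<le> C * norm (\<Sum>i<N. b i *\<^sub>R d i)"
proof -
  define \<beta> where "\<beta> = Max ((\<lambda>i. \<bar>b i\<bar>) ` {..<N})"
  have \<beta>_ge: "\<bar>b i\<bar> \<le> \<beta>" if "i < N" for i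
    unfolding \<beta>_def using that by (intro Max_ge) auto
  have "\<beta> \<in> (\<lambda>i. \<bar>b i\<bar>) ` {..<N}"
    unfolding \<beta>_def using assms by (intro Max_in) auto
  then obtain i0 where "i0 < N" and \<beta>_eq: "\<beta> = \<bar>b i0\<bar>"
    by auto
  have "{..<N} - ({..<N} - {i0}) = {i0}"
    using \<open>i0 < N\<close> by auto
  then have "norm (b i0 *\<^sub>R d i0)
      \<le> C * norm (\<Sum>i<N. b i *\<^sub>R d i) + (\<Sum>i\<in>{..<N} - {i0}. \<bar>b i\<bar> * (2 * M / real (gap_len i)))"
    using norm_sum_outside_le[of "{..<N} - {i0}" N b] by simp
  moreover have "(\<Sum>i\<in>{..<N} - {i0}. \<bar>b i\<bar> * (2 * M / real (gap_len i))) \<le> \<beta> * \<delta> / 2"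
    using \<beta>_ge \<beta>_eq by (intro averaging_error_le) auto
  moreover have "\<bar>b i0\<bar> * \<delta> \<le> norm (b i0 *\<^sub>R d i0)"
    using norm_d_ge[of i0] by (simp add: mult_left_mono)
  ultimately have "\<beta> * \<delta> / 2 \<le> C * norm (\<Sum>i<N. b i *\<^sub>R d i)"
    unfolding \<beta>_eq by linarith
  moreover have "\<bar>b j\<bar> * \<delta> / 2 \<le> \<beta> * \<delta> / 2"
    using \<beta>_ge[OF assms] \<delta>_pos by (simp add: mult_right_mono)
  ultimately show ?thesis by linarith
qed

lemma norm_sum_subset_le:
  assumes "F \<subseteq> {..<N}"
  shows "norm (\<Sum>j\<in>F. b j *\<^sub>R d j) \<le> (2 * C) * norm (\<Sum>j<N. b j *\<^sub>R d j)"
proof -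
  define \<beta> where "\<beta> = 2 * C * norm (\<Sum>j<N. b j *\<^sub>R d j) / \<delta>"
  have "\<bar>b j\<bar> \<le> \<beta>" if "j < N" for j
    using abs_coeff_le_norm[OF that, of b] \<delta>_pos unfolding \<beta>_def by (simp add: field_simps)
  moreover have "0 \<le> \<beta>"
    unfolding \<beta>_def using C_pos \<delta>_pos by simp
  moreover have "{..<N} - ({..<N} - F) = F"
    using assms by auto
  ultimately have "norm (\<Sum>j\<in>F. b j *\<^sub>R d j) \<le> C * norm (\<Sum>j<N. b j *\<^sub>R d j) + \<beta> * \<delta> / 2"
    using norm_sum_outside_le[of "{..<N} - F" N b] averaging_error_le[of "{..<N} - F" N \<beta> b] by force
  also have "\<beta> * \<delta> / 2 = C * norm (\<Sum>j<N. b j *\<^sub>R d j)"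
    unfolding \<beta>_def using \<delta>_pos by simp
  finally show ?thesis by simp
qed

theorem unconditional_basic_seq_d: "unconditional_basic_seq d"
proof -
  interpret suppression_bounded d \<delta> "2 * C"
    using \<delta>_pos C_pos norm_d_ge norm_sum_subset_le by unfold_locales auto
  show ?thesis by (rule unconditional_basic)
qed

end

theorem corollary2p7:
  fixes e :: "nat \<Rightarrow> 'a::banach"
  assumes "seminormalized e" and "basic_seq e" and "quasisubsymmetric e"
  shows "equivalent_l1_basis e \<or>
    (\<exists>k::nat \<Rightarrow> nat. strict_mono k \<and>
       unconditional_basic_seq (\<lambda>n. e (k (2*n+1)) - e (k (2*n))))"
proof -
  obtain \<mu> M where "\<mu> > 0" and norm_ge: "\<And>n. \<mu> \<le> norm (e n)" and norm_le: "\<And>n. norm (e n) \<le> M"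
    using assms(1) unfolding seminormalized_def by blast
  obtain \<delta> where "\<delta> > 0" and separated: "\<And>p q. p < q \<Longrightarrow> \<delta> \<le> norm (e q - e p)"
    using basic_seq_diff_lower_bound[OF assms(2) \<open>\<mu> > 0\<close> norm_ge] by blast
  have "\<And>k l. subseq_le k l \<Longrightarrow> dominates (e \<circ> k) (e \<circ> l)"
    using assms(3) unfolding quasisubsymmetric_def subseq_le_def by blast
  then obtain B C where "C > 0" and uniform: "\<forall>k l a N. subseq_le k l \<longrightarrow> B \<le> k 0 \<longrightarrow>
      norm (\<Sum>n<N. a n *\<^sub>R e (l n)) \<le> C * norm (\<Sum>n<N. a n *\<^sub>R e (k n))"
    using dominates_uniformly_eventually by blast
  obtain L :: nat where "4 * M / \<delta> \<le> real L"
    using real_arch_simple by blast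
  then have "4 * M \<le> real (Suc L) * \<delta>"
    using \<open>\<delta> > 0\<close> by (simp add: divide_le_eq algebra_simps)
  then interpret difference_subsequence e B "Suc L" C M \<delta>
    using \<open>C > 0\<close> \<open>\<delta> > 0\<close> norm_le uniform separated by unfold_locales auto
  show ?thesis
    using unconditional_basic_seq_d strict_mono_sparse unfolding d_def by blast
qed

end
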